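(* Let $\mathcal{A}$ be a topological ring containing $\mathbb{Q}$ and let $(\mathcal{B}_n)_{n\in\mathbb{N}}$ be a countable inverse system of complete topological $\mathcal{A}$-algebras with continuous surjective transition homomorphisms $p_{m,n}\colon\mathcal{B}_m\to\mathcal{B}_n$ for $m\ge n\ge0$. Let $\mathcal{B}=\varprojlim_n\mathcal{B}_n$ with the inverse limit topology and let $p_n\colon\mathcal{B}\to\mathcal{B}_n$ be the canonical continuous projections. Let $\partial_n\colon\mathcal{B}_n\to\mathcal{B}_n$, $n\in\mathbb{N}$, be topologically integrable $\mathcal{A}$-derivations such that $\partial_n\circ p_{m,n}=p_{m,n}\circ\partial_m$ for all $m\ge n\ge0$. Then there exists a unique topologically integrable $\mathcal{A}$-derivation $\partial=\varprojlim_n\partial_n$ of $\mathcal{B}$ such that $\partial_n\circ p_n=p_n\circ\partial$ for every $n\in\mathbb{N}$.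
   Context: Conventions: topological rings are linearly topologized with a countable fundamental system of open ideals; homomorphisms are continuous; complete means the canonical map to $\varprojlim_{\mathfrak{a}}\mathcal{B}/\mathfrak{a}$ (open ideals, discrete quotients) is a topological isomorphism; a complete topological $\mathcal{A}$-algebra is a complete topological ring with a continuous homomorphism from $\mathcal{A}$. A continuous $\mathcal{A}$-derivation $\partial$ of $\mathcal{B}$ is a continuous $\mathcal{A}$-linear map $\mathcal{B}\to\mathcal{B}$ satisfying the Leibniz rule; it is topologically integrable if $(\partial^i)_{i\in\mathbb{N}}$ converges continuously to $0$: for every $b\in\mathcal{B}$ and every open ideal $\mathfrak{b}'$ there exist an open ideal $\mathfrak{b}$ and $n_0$ with $\partial^n(b+\mathfrak{b})\subseteq\mathfrak{b}'$ for all $n\ge n_0$. *)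

theory Defs
  imports "HOL-Algebra.Algebra" "HOL-Library.Countable_Set"
begin

text \<open>A linearly topologized (commutative) ring, given by its set T of open ideals:
  the open ideals form a filter base of ideals, every ideal containing an open ideal is
  open, and there is a countable fundamental system of open ideals.\<close>
definition lin_top_ring :: "('a, 'm) ring_scheme \<Rightarrow> 'a set set \<Rightarrow> bool" where
  "lin_top_ring R T \<longleftrightarrow> cring R \<and> (\<forall>a\<in>T. ideal a R) \<and> carrier R \<in> T
     \<and> (\<forall>a\<in>T. \<forall>b\<in>T. a \<inter> b \<in> T)
     \<and> (\<forall>a\<in>T. \<forall>I. ideal I R \<and> a \<subseteq> I \<longrightarrow> I \<in> T)
     \<and> (\<exists>C. countable C \<and> C \<subseteq> T \<and> (\<forall>a\<in>T. \<exists>c\<in>C. c \<subseteq> a))"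

text \<open>Completeness: the canonical map to the inverse limit of the discrete quotients R/a
  (a open) is bijective (it is then automatically a topological isomorphism).
  Injectivity: the open ideals intersect to 0. Surjectivity: every compatible family of
  cosets c a \<in> R/a has a common element.\<close>
definition complete_ring :: "('a, 'm) ring_scheme \<Rightarrow> 'a set set \<Rightarrow> bool" where
  "complete_ring R T \<longleftrightarrow> (\<Inter>T = {\<zero>\<^bsub>R\<^esub>})
     \<and> (\<forall>c. (\<forall>a\<in>T. c a \<in> a_rcosets\<^bsub>R\<^esub> a) \<and> (\<forall>a\<in>T. \<forall>b\<in>T. a \<subseteq> b \<longrightarrow> c a \<subseteq> c b)
           \<longrightarrow> (\<exists>x\<in>carrier R. \<forall>a\<in>T. x \<in> c a))"

text \<open>Continuity of an additive map between linearly topologized rings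
  (equivalently, continuity at 0).\<close>
definition cont_map :: "('a, 'm) ring_scheme \<Rightarrow> 'a set set \<Rightarrow> ('b, 'n) ring_scheme \<Rightarrow> 'b set set
     \<Rightarrow> ('a \<Rightarrow> 'b) \<Rightarrow> bool" where
  "cont_map R T S U f \<longleftrightarrow> f \<in> carrier R \<rightarrow> carrier S \<and> (\<forall>b\<in>U. \<exists>a\<in>T. f ` a \<subseteq> b)"

definition complete_top_algebra :: "('a, 'm) ring_scheme \<Rightarrow> 'a set set \<Rightarrow> ('b, 'n) ring_scheme
     \<Rightarrow> 'b set set \<Rightarrow> ('a \<Rightarrow> 'b) \<Rightarrow> bool" where
  "complete_top_algebra A TA B TB phi \<longleftrightarrow> lin_top_ring A TA \<and> lin_top_ring B TB
     \<and> complete_ring B TB \<and> phi \<in> ring_hom A B \<and> cont_map A TA B TB phi"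

definition cont_derivation :: "('a, 'm) ring_scheme \<Rightarrow> ('a \<Rightarrow> 'b) \<Rightarrow> ('b, 'n) ring_scheme
     \<Rightarrow> 'b set set \<Rightarrow> ('b \<Rightarrow> 'b) \<Rightarrow> bool" where
  "cont_derivation A phi B TB D \<longleftrightarrow> cont_map B TB B TB D
     \<and> (\<forall>x\<in>carrier B. \<forall>y\<in>carrier B. D (x \<oplus>\<^bsub>B\<^esub> y) = D x \<oplus>\<^bsub>B\<^esub> D y)
     \<and> (\<forall>a\<in>carrier A. \<forall>x\<in>carrier B. D (phi a \<otimes>\<^bsub>B\<^esub> x) = phi a \<otimes>\<^bsub>B\<^esub> D x)
     \<and> (\<forall>x\<in>carrier B. \<forall>y\<in>carrier B.
          D (x \<otimes>\<^bsub>B\<^esub> y) = (x \<otimes>\<^bsub>B\<^esub> D y) \<oplus>\<^bsub>B\<^esub> (D x \<otimes>\<^bsub>B\<^esub> y))"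

text \<open>Topological integrability: the powers of D converge continuously to 0.\<close>
definition top_integrable :: "('b, 'n) ring_scheme \<Rightarrow> 'b set set \<Rightarrow> ('b \<Rightarrow> 'b) \<Rightarrow> bool" where
  "top_integrable B TB D \<longleftrightarrow> (\<forall>b\<in>carrier B. \<forall>b'\<in>TB. \<exists>bb\<in>TB. \<exists>n0::nat. \<forall>n\<ge>n0.
      (D ^^ n) ` {b \<oplus>\<^bsub>B\<^esub> y | y. y \<in> bb} \<subseteq> b')"

definition inv_lim_ring :: "(nat \<Rightarrow> ('b, 'n) ring_scheme) \<Rightarrow> (nat \<Rightarrow> nat \<Rightarrow> 'b \<Rightarrow> 'b)
     \<Rightarrow> (nat \<Rightarrow> 'b) ring" where
  "inv_lim_ring Bs p = \<lparr> carrier = {x. (\<forall>n. x n \<in> carrier (Bs n))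
                                      \<and> (\<forall>m n. n \<le> m \<longrightarrow> p m n (x m) = x n)},
     monoid.mult = (\<lambda>x y n. x n \<otimes>\<^bsub>Bs n\<^esub> y n),
     one = (\<lambda>n. \<one>\<^bsub>Bs n\<^esub>),
     ring.zero = (\<lambda>n. \<zero>\<^bsub>Bs n\<^esub>),
     add = (\<lambda>x y n. x n \<oplus>\<^bsub>Bs n\<^esub> y n) \<rparr>"

text \<open>Open ideals of the inverse limit topology (subspace of the product topology):
  ideals containing a finite intersection of preimages p_n^{-1}(a), a open in Bs n.\<close>
definition inv_lim_top :: "(nat \<Rightarrow> ('b, 'n) ring_scheme) \<Rightarrow> (nat \<Rightarrow> nat \<Rightarrow> 'b \<Rightarrow> 'b)
     \<Rightarrow> (nat \<Rightarrow> 'b set set) \<Rightarrow> (nat \<Rightarrow> 'b) set set" where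
  "inv_lim_top Bs p T = {I. ideal I (inv_lim_ring Bs p) \<and>
     (\<exists>F. finite F \<and> (\<forall>(n, a)\<in>F. a \<in> T n) \<and>
        carrier (inv_lim_ring Bs p) \<inter> (\<Inter>(n, a)\<in>F. {x. x n \<in> a}) \<subseteq> I)}"

end

theory Submission imports Defs begin

text \<open>The limit derivation is forced to act componentwise, \<open>\<partial> x = (\<partial>\<^sub>n (x n))\<^sub>n\<close>; compatibility
  of the \<open>\<partial>\<^sub>n\<close> with the transition maps makes this a compatible sequence again. Every open ideal
  of the limit contains a cylinder, a finite intersection of preimages of open ideals of
  finitely many \<open>B\<^sub>n\<close>. Continuity and topological integrability are therefore conditions on
  finitely many components, each granted by the corresponding property of \<open>\<partial>\<^sub>n\<close>; for
  integrability the finitely many thresholds \<open>n\<^sub>0\<close> are combined into their maximum.\<close>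

definition cylinder :: "(nat \<Rightarrow> ('b, 'n) ring_scheme) \<Rightarrow> (nat \<Rightarrow> nat \<Rightarrow> 'b \<Rightarrow> 'b)
    \<Rightarrow> (nat \<times> 'b set) set \<Rightarrow> (nat \<Rightarrow> 'b) set" where
  "cylinder Bs p F = carrier (inv_lim_ring Bs p) \<inter> (\<Inter>(n, a)\<in>F. {x. x n \<in> a})"

definition inv_lim_map :: "(nat \<Rightarrow> 'b \<Rightarrow> 'b) \<Rightarrow> (nat \<Rightarrow> 'b) \<Rightarrow> nat \<Rightarrow> 'b" where
  "inv_lim_map f x = (\<lambda>n. f n (x n))"

lemma mem_inv_lim_ring:
  "x \<in> carrier (inv_lim_ring Bs p) \<longleftrightarrow>
     (\<forall>n. x n \<in> carrier (Bs n)) \<and> (\<forall>m n. n \<le> m \<longrightarrow> p m n (x m) = x n)"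
  by (simp add: inv_lim_ring_def)

lemma mem_cylinder:
  "x \<in> cylinder Bs p F \<longleftrightarrow> x \<in> carrier (inv_lim_ring Bs p) \<and> (\<forall>(n, a)\<in>F. x n \<in> a)"
  by (auto simp: cylinder_def)

lemma mem_cylinder_image:
  "x \<in> cylinder Bs p ((\<lambda>(n, a). (n, g n a)) ` F) \<longleftrightarrow>
     x \<in> carrier (inv_lim_ring Bs p) \<and> (\<forall>(n, a)\<in>F. x n \<in> g n a)"
  by (auto simp: cylinder_def)

lemma inv_lim_ring_cring:
  assumes cr: "\<And>n. cring (Bs n)"
    and hom: "\<And>m n. n \<le> m \<Longrightarrow> p m n \<in> ring_hom (Bs m) (Bs n)"
  shows "cring (inv_lim_ring Bs p)"
proof -
  interpret Bn: cring "Bs n" for n by (rule cr)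
  have hom_cring: "ring_hom_cring (Bs m) (Bs n) (p m n)" if "n \<le> m" for m n
    using hom[OF that] cr by (simp add: ring_hom_cring.intro ring_hom_cring_axioms.intro)
  show ?thesis
  proof (rule cringI)
    show "abelian_group (inv_lim_ring Bs p)"
    proof (rule abelian_groupI)
      fix x assume x: "x \<in> carrier (inv_lim_ring Bs p)"
      show "\<exists>y\<in>carrier (inv_lim_ring Bs p). y \<oplus>\<^bsub>inv_lim_ring Bs p\<^esub> x = \<zero>\<^bsub>inv_lim_ring Bs p\<^esub>"
      proof
        show "(\<lambda>n. \<ominus>\<^bsub>Bs n\<^esub> x n) \<in> carrier (inv_lim_ring Bs p)"
          using x by (auto simp: inv_lim_ring_def ring_hom_cring.hom_a_inv[OF hom_cring])
      qed (use x in \<open>auto simp: inv_lim_ring_def Bn.l_neg\<close>)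
    qed (auto simp: inv_lim_ring_def ring_hom_cring.hom_zero[OF hom_cring]
                    ring_hom_add[OF hom] Bn.a_ac)
  next
    show "comm_monoid (inv_lim_ring Bs p)"
      by (rule comm_monoidI)
        (auto simp: inv_lim_ring_def ring_hom_one[OF hom] ring_hom_mult[OF hom] Bn.m_ac)
  qed (auto simp: inv_lim_ring_def Bn.l_distr)
qed

lemma inv_lim_proj_ring_hom: "(\<lambda>x. x n) \<in> ring_hom (inv_lim_ring Bs p) (Bs n)"
  by (rule ring_hom_memI) (auto simp: inv_lim_ring_def)

lemma cylinder_ideal:
  assumes cr: "\<And>n. cring (Bs n)"
    and hom: "\<And>m n. n \<le> m \<Longrightarrow> p m n \<in> ring_hom (Bs m) (Bs n)"
    and ideals: "\<And>n a. (n, a) \<in> F \<Longrightarrow> ideal a (Bs n)"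
  shows "ideal (cylinder Bs p F) (inv_lim_ring Bs p)"
proof -
  let ?R = "inv_lim_ring Bs p"
  interpret R: cring ?R by (rule inv_lim_ring_cring[OF cr hom])
  have "ideal {x \<in> carrier ?R. x n \<in> a} ?R" if "(n, a) \<in> F" for n a
  proof -
    interpret proj: ring_hom_ring ?R "Bs n" "\<lambda>x. x n"
      using R.ring_axioms cring.axioms(1)[OF cr] inv_lim_proj_ring_hom
      by (rule ring_hom_ringI2)
    show ?thesis by (rule proj.ideal_vimage[OF ideals[OF that]])
  qed
  then have "ideal (\<Inter>(insert (carrier ?R) ((\<lambda>(n, a). {x \<in> carrier ?R. x n \<in> a}) ` F))) ?R"
    by (intro R.i_Intersect) (auto intro: R.oneideal)
  moreover have "\<Inter>(insert (carrier ?R) ((\<lambda>(n, a). {x \<in> carrier ?R. x n \<in> a}) ` F))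
      = cylinder Bs p F"
    by (auto simp: cylinder_def)
  ultimately show ?thesis by simp
qed

lemma inv_lim_topE:
  assumes "I \<in> inv_lim_top Bs p T"
  obtains F where "finite F" "\<And>n a. (n, a) \<in> F \<Longrightarrow> a \<in> T n" "cylinder Bs p F \<subseteq> I"
  using assms unfolding inv_lim_top_def cylinder_def by blast

lemma inv_lim_map_closed:
  assumes closed: "\<And>n. f n \<in> carrier (Bs n) \<rightarrow> carrier (Bs n)"
    and compat: "\<And>m n x. n \<le> m \<Longrightarrow> x \<in> carrier (Bs m) \<Longrightarrow> f n (p m n x) = p m n (f m x)"
    and x: "x \<in> carrier (inv_lim_ring Bs p)"
  shows "inv_lim_map f x \<in> carrier (inv_lim_ring Bs p)"
  unfolding mem_inv_lim_ring inv_lim_map_def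
proof (intro conjI allI impI)
  show "f n (x n) \<in> carrier (Bs n)" for n
    using x closed by (auto simp: mem_inv_lim_ring)
  show "p m n (f m (x m)) = f n (x n)" if "n \<le> m" for m n
    using x compat[OF that, of "x m"] that by (simp add: mem_inv_lim_ring)
qed

lemma funpow_inv_lim_map_closed:
  assumes "\<And>n. f n \<in> carrier (Bs n) \<rightarrow> carrier (Bs n)"
    and "\<And>m n x. n \<le> m \<Longrightarrow> x \<in> carrier (Bs m) \<Longrightarrow> f n (p m n x) = p m n (f m x)"
    and "x \<in> carrier (inv_lim_ring Bs p)"
  shows "(inv_lim_map f ^^ k) x \<in> carrier (inv_lim_ring Bs p)"
  by (induction k) (simp_all add: assms inv_lim_map_closed)

lemma funpow_inv_lim_map: "inv_lim_map f ^^ k = inv_lim_map (\<lambda>n. f n ^^ k)"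
  by (induction k) (auto simp: inv_lim_map_def)

locale lin_top_inverse_system =
  fixes Bs :: "nat \<Rightarrow> ('b, 'n) ring_scheme" and T :: "nat \<Rightarrow> 'b set set"
    and p :: "nat \<Rightarrow> nat \<Rightarrow> 'b \<Rightarrow> 'b"
  assumes lin_top: "lin_top_ring (Bs n) (T n)"
    and trans_hom: "n \<le> m \<Longrightarrow> p m n \<in> ring_hom (Bs m) (Bs n)"
begin

lemma inv_lim_cring: "cring (inv_lim_ring Bs p)"
  using lin_top trans_hom by (intro inv_lim_ring_cring) (auto simp: lin_top_ring_def)

lemma cylinder_in_inv_lim_top:
  assumes "finite F" and opens: "\<And>n a. (n, a) \<in> F \<Longrightarrow> a \<in> T n"
  shows "cylinder Bs p F \<in> inv_lim_top Bs p T"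
proof -
  have "ideal (cylinder Bs p F) (inv_lim_ring Bs p)"
    using lin_top opens trans_hom by (intro cylinder_ideal) (auto simp: lin_top_ring_def)
  then show ?thesis
    using \<open>finite F\<close> opens unfolding inv_lim_top_def cylinder_def by blast
qed

lemma cylinder_refine:
  assumes "finite F" and refine: "\<forall>(n, a)\<in>F. \<exists>a'\<in>T n. P n a a'"
  obtains g where "\<And>n a. (n, a) \<in> F \<Longrightarrow> P n a (g n a)"
    and "cylinder Bs p ((\<lambda>(n, a). (n, g n a)) ` F) \<in> inv_lim_top Bs p T"
proof -
  have "\<forall>x\<in>F. \<exists>a'. a' \<in> T (fst x) \<and> P (fst x) (snd x) a'"
    using refine by (auto simp: Ball_def)
  then obtain h where h: "\<forall>x\<in>F. h x \<in> T (fst x) \<and> P (fst x) (snd x) (h x)"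
    by (rule bchoice[THEN exE])
  define g where "g n a = h (n, a)" for n a
  have g: "g n a \<in> T n" "P n a (g n a)" if "(n, a) \<in> F" for n a
    using h that by (force simp: g_def)+
  have "cylinder Bs p ((\<lambda>(n, a). (n, g n a)) ` F) \<in> inv_lim_top Bs p T"
    using g(1) \<open>finite F\<close> by (intro cylinder_in_inv_lim_top) auto
  with g(2) show ?thesis by (rule that)
qed

lemma cont_map_inv_lim_map:
  assumes cont: "\<And>n. cont_map (Bs n) (T n) (Bs n) (T n) (f n)"
    and compat: "\<And>m n x. n \<le> m \<Longrightarrow> x \<in> carrier (Bs m) \<Longrightarrow> f n (p m n x) = p m n (f m x)"
  shows "cont_map (inv_lim_ring Bs p) (inv_lim_top Bs p T)
           (inv_lim_ring Bs p) (inv_lim_top Bs p T) (inv_lim_map f)"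
  unfolding cont_map_def
proof (intro conjI ballI)
  have closed: "f n \<in> carrier (Bs n) \<rightarrow> carrier (Bs n)" for n
    using cont by (simp add: cont_map_def)
  show "inv_lim_map f \<in> carrier (inv_lim_ring Bs p) \<rightarrow> carrier (inv_lim_ring Bs p)"
    using inv_lim_map_closed[where f = f and Bs = Bs and p = p, OF closed compat] by blast
  fix I assume "I \<in> inv_lim_top Bs p T"
  then obtain F where F: "finite F" "\<And>n a. (n, a) \<in> F \<Longrightarrow> a \<in> T n" "cylinder Bs p F \<subseteq> I"
    by (erule inv_lim_topE)
  have refine: "\<forall>(n, a)\<in>F. \<exists>a'\<in>T n. f n ` a' \<subseteq> a"
    using cont F(2) by (auto simp: cont_map_def)
  obtain g where g: "\<And>n a. (n, a) \<in> F \<Longrightarrow> f n ` g n a \<subseteq> a"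
    and J: "cylinder Bs p ((\<lambda>(n, a). (n, g n a)) ` F) \<in> inv_lim_top Bs p T"
    using cylinder_refine[OF \<open>finite F\<close> refine] by blast
  have "inv_lim_map f ` cylinder Bs p ((\<lambda>(n, a). (n, g n a)) ` F) \<subseteq> cylinder Bs p F"
  proof (rule image_subsetI)
    fix x assume "x \<in> cylinder Bs p ((\<lambda>(n, a). (n, g n a)) ` F)"
    then have x: "x \<in> carrier (inv_lim_ring Bs p)" "\<And>n a. (n, a) \<in> F \<Longrightarrow> x n \<in> g n a"
      by (auto simp: mem_cylinder)
    show "inv_lim_map f x \<in> cylinder Bs p F"
      unfolding mem_cylinder
      using inv_lim_map_closed[where f = f and Bs = Bs and p = p, OF closed compat x(1)]
        g x(2) by (fastforce simp: inv_lim_map_def)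
  qed
  with J F(3) show "\<exists>J\<in>inv_lim_top Bs p T. inv_lim_map f ` J \<subseteq> I" by blast
qed

lemma cont_derivation_inv_lim_map:
  assumes der: "\<And>n. cont_derivation A (phi n) (Bs n) (T n) (d n)"
    and compat: "\<And>m n x. n \<le> m \<Longrightarrow> x \<in> carrier (Bs m) \<Longrightarrow> d n (p m n x) = p m n (d m x)"
  shows "cont_derivation A (\<lambda>a n. phi n a) (inv_lim_ring Bs p) (inv_lim_top Bs p T)
           (inv_lim_map d)"
proof -
  have "cont_map (inv_lim_ring Bs p) (inv_lim_top Bs p T)
          (inv_lim_ring Bs p) (inv_lim_top Bs p T) (inv_lim_map d)"
    using der by (intro cont_map_inv_lim_map[OF _ compat]) (simp add: cont_derivation_def)
  then show ?thesis
    using der unfolding cont_derivation_def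
    by (auto simp: mem_inv_lim_ring inv_lim_map_def inv_lim_ring_def)
qed

lemma top_integrable_inv_lim_map:
  assumes closed: "\<And>n. f n \<in> carrier (Bs n) \<rightarrow> carrier (Bs n)"
    and compat: "\<And>m n x. n \<le> m \<Longrightarrow> x \<in> carrier (Bs m) \<Longrightarrow> f n (p m n x) = p m n (f m x)"
    and int: "\<And>n. top_integrable (Bs n) (T n) (f n)"
  shows "top_integrable (inv_lim_ring Bs p) (inv_lim_top Bs p T) (inv_lim_map f)"
  unfolding top_integrable_def
proof (intro ballI)
  let ?R = "inv_lim_ring Bs p"
  fix b I assume b: "b \<in> carrier ?R" and "I \<in> inv_lim_top Bs p T"
  from \<open>I \<in> inv_lim_top Bs p T\<close> obtain F
    where F: "finite F" "\<And>n a. (n, a) \<in> F \<Longrightarrow> a \<in> T n" "cylinder Bs p F \<subseteq> I"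
    by (erule inv_lim_topE)
  define P where "P n a a' \<longleftrightarrow>
    (\<forall>\<^sub>F k in sequentially. (f n ^^ k) ` {b n \<oplus>\<^bsub>Bs n\<^esub> y | y. y \<in> a'} \<subseteq> a)" for n a a'
  have refine: "\<forall>(n, a)\<in>F. \<exists>a'\<in>T n. P n a a'"
    using int b F(2)
    by (auto simp: top_integrable_def P_def eventually_sequentially mem_inv_lim_ring)
  obtain g where g: "\<And>n a. (n, a) \<in> F \<Longrightarrow> P n a (g n a)"
    and J: "cylinder Bs p ((\<lambda>(n, a). (n, g n a)) ` F) \<in> inv_lim_top Bs p T"
    using cylinder_refine[OF \<open>finite F\<close> refine] by blast
  have "\<forall>\<^sub>F k in sequentially.
      \<forall>(n, a)\<in>F. (f n ^^ k) ` {b n \<oplus>\<^bsub>Bs n\<^esub> y | y. y \<in> g n a} \<subseteq> a"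
    using g \<open>finite F\<close> by (intro eventually_ball_finite) (auto simp: P_def)
  then obtain N where N: "\<And>k. N \<le> k \<Longrightarrow>
      \<forall>(n, a)\<in>F. (f n ^^ k) ` {b n \<oplus>\<^bsub>Bs n\<^esub> y | y. y \<in> g n a} \<subseteq> a"
    unfolding eventually_sequentially by blast
  have "(inv_lim_map f ^^ k) ` {b \<oplus>\<^bsub>?R\<^esub> y | y. y \<in> cylinder Bs p ((\<lambda>(n, a). (n, g n a)) ` F)}
          \<subseteq> cylinder Bs p F" if "N \<le> k" for k
  proof (rule image_subsetI)
    fix z assume "z \<in> {b \<oplus>\<^bsub>?R\<^esub> y | y. y \<in> cylinder Bs p ((\<lambda>(n, a). (n, g n a)) ` F)}"
    then obtain y where y: "y \<in> carrier ?R" "\<And>n a. (n, a) \<in> F \<Longrightarrow> y n \<in> g n a"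
      and z: "z = b \<oplus>\<^bsub>?R\<^esub> y"
      by (auto simp: mem_cylinder_image)
    have "z \<in> carrier ?R"
      using b y(1) z inv_lim_cring by (simp add: cring.cring_simprules(1))
    then have "(inv_lim_map f ^^ k) z \<in> carrier ?R"
      using closed compat by (rule funpow_inv_lim_map_closed[rotated 2])
    moreover have "(inv_lim_map f ^^ k) z n \<in> a" if "(n, a) \<in> F" for n a
    proof -
      have "(f n ^^ k) ` {b n \<oplus>\<^bsub>Bs n\<^esub> y | y. y \<in> g n a} \<subseteq> a"
        using bspec[OF N[OF \<open>N \<le> k\<close>] that] by simp
      then show ?thesis
        using y(2)[OF that] z
        by (auto simp: funpow_inv_lim_map inv_lim_map_def inv_lim_ring_def)
    qed
    ultimately show "(inv_lim_map f ^^ k) z \<in> cylinder Bs p F"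
      by (auto simp: mem_cylinder)
  qed
  with J F(3) show "\<exists>J\<in>inv_lim_top Bs p T. \<exists>N. \<forall>k\<ge>N.
      (inv_lim_map f ^^ k) ` {b \<oplus>\<^bsub>?R\<^esub> y | y. y \<in> J} \<subseteq> I"
    by blast
qed

end

theorem proposition2p29:
  fixes A :: "('a, 'c) ring_scheme" and TA :: "'a set set"
    and Bs :: "nat \<Rightarrow> ('b, 'd) ring_scheme" and T :: "nat \<Rightarrow> 'b set set"
    and phi :: "nat \<Rightarrow> 'a \<Rightarrow> 'b"
    and p :: "nat \<Rightarrow> nat \<Rightarrow> 'b \<Rightarrow> 'b"
    and d :: "nat \<Rightarrow> 'b \<Rightarrow> 'b"
  assumes A_top: "lin_top_ring A TA"
    and A_Q: "\<one>\<^bsub>A\<^esub> \<noteq> \<zero>\<^bsub>A\<^esub>" "\<And>k::nat. k > 0 \<Longrightarrow> add_pow A k \<one>\<^bsub>A\<^esub> \<in> Units A"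
    and B_alg: "\<And>n. complete_top_algebra A TA (Bs n) (T n) (phi n)"
    and p_hom: "\<And>m n. n \<le> m \<Longrightarrow> p m n \<in> ring_hom (Bs m) (Bs n)"
    and p_cont: "\<And>m n. n \<le> m \<Longrightarrow> cont_map (Bs m) (T m) (Bs n) (T n) (p m n)"
    and p_surj: "\<And>m n. n \<le> m \<Longrightarrow> p m n ` carrier (Bs m) = carrier (Bs n)"
    and p_alg: "\<And>m n a. n \<le> m \<Longrightarrow> a \<in> carrier A \<Longrightarrow> p m n (phi m a) = phi n a"
    and p_id: "\<And>n x. x \<in> carrier (Bs n) \<Longrightarrow> p n n x = x"
    and p_comp: "\<And>k m n x. n \<le> m \<Longrightarrow> m \<le> k \<Longrightarrow> x \<in> carrier (Bs k) \<Longrightarrow>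
                   p m n (p k m x) = p k n x"
    and d_der: "\<And>n. cont_derivation A (phi n) (Bs n) (T n) (d n)"
    and d_int: "\<And>n. top_integrable (Bs n) (T n) (d n)"
    and d_comm: "\<And>m n x. n \<le> m \<Longrightarrow> x \<in> carrier (Bs m) \<Longrightarrow> d n (p m n x) = p m n (d m x)"
  shows "\<exists>D. cont_derivation A (\<lambda>a n. phi n a) (inv_lim_ring Bs p) (inv_lim_top Bs p T) D
           \<and> top_integrable (inv_lim_ring Bs p) (inv_lim_top Bs p T) D
           \<and> (\<forall>n. \<forall>x\<in>carrier (inv_lim_ring Bs p). d n (x n) = D x n)
           \<and> (\<forall>D'. cont_derivation A (\<lambda>a n. phi n a) (inv_lim_ring Bs p) (inv_lim_top Bs p T) D'
                 \<and> top_integrable (inv_lim_ring Bs p) (inv_lim_top Bs p T) D'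
                 \<and> (\<forall>n. \<forall>x\<in>carrier (inv_lim_ring Bs p). d n (x n) = D' x n)
                 \<longrightarrow> (\<forall>x\<in>carrier (inv_lim_ring Bs p). D' x = D x))"
proof -
  interpret lin_top_inverse_system Bs T p
    using B_alg p_hom by unfold_locales (auto simp: complete_top_algebra_def)
  have d_closed: "d n \<in> carrier (Bs n) \<rightarrow> carrier (Bs n)" for n
    using d_der by (simp add: cont_derivation_def cont_map_def)
  show ?thesis
  proof (intro exI[of _ "inv_lim_map d"] conjI allI ballI impI)
    show "cont_derivation A (\<lambda>a n. phi n a) (inv_lim_ring Bs p) (inv_lim_top Bs p T) (inv_lim_map d)"
      using d_der d_comm by (rule cont_derivation_inv_lim_map)
    show "top_integrable (inv_lim_ring Bs p) (inv_lim_top Bs p T) (inv_lim_map d)"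
      using d_closed d_comm d_int by (rule top_integrable_inv_lim_map)
    show "d n (x n) = inv_lim_map d x n" for n x
      by (simp add: inv_lim_map_def)
    fix D' x assume "cont_derivation A (\<lambda>a n. phi n a) (inv_lim_ring Bs p) (inv_lim_top Bs p T) D'
        \<and> top_integrable (inv_lim_ring Bs p) (inv_lim_top Bs p T) D'
        \<and> (\<forall>n. \<forall>x\<in>carrier (inv_lim_ring Bs p). d n (x n) = D' x n)"
      and "x \<in> carrier (inv_lim_ring Bs p)"
    then show "D' x = inv_lim_map d x"
      by (auto simp: inv_lim_map_def)
  qed
qed

end
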